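(* Let $(B,D,d,\theta)$, $(B',D',d',\theta')$ be E-systems and let $(F,\breve F,\widetilde F):\mathcal A_{B\to D}\to\mathcal A_{B'\to D'}$ be a single Ann-functor. Define $f_0:D\to D'$ by $f_0(x)=F(x)$ and $f_1:B\to B'$ by $f_1(b)=F(b)$, where $b$ is regarded as the morphism $0\xrightarrow{b}d(b)$ and $F(b)\in B'$ is the element labelling its image. Then $(f_1,f_0)$ is a morphism of E-systems $(B,D,d,\theta)\to(B',D',d',\theta')$.
   Context: E-system $(B,D,d,\theta)$: $B$ a ring, $D$ a unital ring, $d:B\to D$, $\theta:D\to M_B$ ring homomorphisms ($M_B$ ring of bimultiplications of $B$), $\theta(d(b))=\mu_b$ (inner bimultiplication), $d(\theta_xb)=x\,d(b)$, $d(b\theta_x)=d(b)x$. Morphism of E-systems: ring homomorphisms $f_1:B\to B'$, $f_0:D\to D'$ with $f_0d=d'f_1$, $f_1(\theta_xb)=\theta'_{f_0(x)}f_1(b)$, $f_1(b\theta_x)=f_1(b)\theta'_{f_0(x)}$. Associated strict Ann-category $\mathcal A_{B\to D}$: objects the elements of $D$; morphisms $x\to y$ are $b\in B$ with $y=d(b)+x$; composition is addition in $B$; $\oplus,\otimes$ on objects are $+,\cdot$ of $D$; on morphisms $(x\xrightarrow{b}y)\oplus(x'\xrightarrow{b'}y')=(x+x'\xrightarrow{b+b'}y+y')$, $(x\xrightarrow{b}y)\otimes(x'\xrightarrow{b'}y')=(xx'\xrightarrow{bb'+b\theta_{x'}+\theta_xb'}yy')$; all constraints identities. An Ann-functor $(F,\breve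 F,\widetilde F)$ is a functor with natural isomorphisms $\breve F_{X,Y}:F(X\oplus Y)\to FX\oplus FY$, $\widetilde F_{X,Y}:F(X\otimes Y)\to FX\otimes FY$, $F_*:F(1)\to1'$ making $F$ symmetric monoidal for $\oplus$, monoidal for $\otimes$, and compatible with the distributivity constraints. An Ann-functor between associated Ann-categories is single if $F(0)=0'$, $F(1)=1'$ and $\breve F_{x,y}$, $\widetilde F_{x,y}$ are constant (the same element of $B'$ for all $x,y$). *)

theory Defs
  imports Main
begin

text \<open>The ring B is the whole of a type 'b of class ring (not necessarily
unital), D is the whole of a type 'd of class ring_1. A bimultiplication sigma of B is
represented by a pair of maps (l, r) with l b = sigma b and r b = b sigma.
The map theta : D -> M_B is represented by two maps thl, thr with
thl x b = theta_x b and thr x b = b theta_x.\<close>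

definition ring_hom' :: "('a::ring \<Rightarrow> 'b::ring) \<Rightarrow> bool" where
  "ring_hom' f \<longleftrightarrow> (\<forall>a b. f (a + b) = f a + f b) \<and> (\<forall>a b. f (a * b) = f a * f b)"

definition bimult :: "('b::ring \<Rightarrow> 'b) \<Rightarrow> ('b \<Rightarrow> 'b) \<Rightarrow> bool" where
  "bimult l r \<longleftrightarrow>
     (\<forall>a b. l (a + b) = l a + l b) \<and> (\<forall>a b. r (a + b) = r a + r b) \<and>
     (\<forall>a b. l (a * b) = l a * b) \<and> (\<forall>a b. r (a * b) = a * r b) \<and>
     (\<forall>a b. a * l b = r a * b)"

text \<open>theta : D -> M_B is a ring homomorphism into the ring of bimultiplications:
sum is pointwise, and the product sigma tau acts by (sigma tau) b = sigma (tau b),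
b (sigma tau) = (b sigma) tau.\<close>
definition theta_hom :: "('d::ring_1 \<Rightarrow> 'b::ring \<Rightarrow> 'b) \<Rightarrow> ('d \<Rightarrow> 'b \<Rightarrow> 'b) \<Rightarrow> bool" where
  "theta_hom thl thr \<longleftrightarrow>
     (\<forall>x. bimult (thl x) (thr x)) \<and>
     (\<forall>x y b. thl (x + y) b = thl x b + thl y b) \<and>
     (\<forall>x y b. thr (x + y) b = thr x b + thr y b) \<and>
     (\<forall>x y b. thl (x * y) b = thl x (thl y b)) \<and>
     (\<forall>x y b. thr (x * y) b = thr y (thr x b))"

definition E_system :: "('b::ring \<Rightarrow> 'd::ring_1) \<Rightarrow> ('d \<Rightarrow> 'b \<Rightarrow> 'b) \<Rightarrow> ('d \<Rightarrow> 'b \<Rightarrow> 'b) \<Rightarrow> bool" where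
  "E_system d thl thr \<longleftrightarrow>
     ring_hom' d \<and> theta_hom thl thr \<and>
     (\<forall>b c. thl (d b) c = b * c \<and> thr (d b) c = c * b) \<and>
     (\<forall>x b. d (thl x b) = x * d b) \<and>
     (\<forall>x b. d (thr x b) = d b * x)"

definition E_morphism ::
  "('b::ring \<Rightarrow> 'd::ring_1) \<Rightarrow> ('d \<Rightarrow> 'b \<Rightarrow> 'b) \<Rightarrow> ('d \<Rightarrow> 'b \<Rightarrow> 'b) \<Rightarrow>
   ('b'::ring \<Rightarrow> 'd'::ring_1) \<Rightarrow> ('d' \<Rightarrow> 'b' \<Rightarrow> 'b') \<Rightarrow> ('d' \<Rightarrow> 'b' \<Rightarrow> 'b') \<Rightarrow>
   ('b \<Rightarrow> 'b') \<Rightarrow> ('d \<Rightarrow> 'd') \<Rightarrow> bool" where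
  "E_morphism d thl thr d' thl' thr' f1 f0 \<longleftrightarrow>
     ring_hom' f1 \<and> ring_hom' f0 \<and>
     (\<forall>b. f0 (d b) = d' (f1 b)) \<and>
     (\<forall>x b. f1 (thl x b) = thl' (f0 x) (f1 b)) \<and>
     (\<forall>x b. f1 (thr x b) = thr' (f0 x) (f1 b))"

text \<open>The associated Ann-category A_{B->D}: objects are elements of D; a morphism
x -> y is a label b with y = d b + x; it is determined by its source x and label b.
Identities have label 0, composition is addition of labels, the sum of morphisms has
label b + b', the product of (x -b-> y) and (x' -b'-> y') has label tlab x b x' b'.\<close>
definition tlab :: "('d::ring_1 \<Rightarrow> 'b::ring \<Rightarrow> 'b) \<Rightarrow> ('d \<Rightarrow> 'b \<Rightarrow> 'b) \<Rightarrow> 'd \<Rightarrow> 'b \<Rightarrow> 'd \<Rightarrow> 'b \<Rightarrow> 'b" where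
  "tlab thl thr x b x' b' = b * b' + thr x' b + thl x b'"

text \<open>Fo: object map; Fm x b: label of the image of the morphism x -b-> d b + x;
Fs x y: label of F-breve_{x,y} : F(x+y) -> Fx + Fy;
Fz: label of the unit isomorphism F(0) -> 0';
Fp x y: label of F-tilde_{x,y} : F(xy) -> Fx Fy;
Fu: label of F_* : F(1) -> 1'.
All constraints of the associated Ann-categories are identities (label 0).
Composites are written in diagrammatic order (labels add).\<close>
definition ann_functor ::
  "('b::ring \<Rightarrow> 'd::ring_1) \<Rightarrow> ('d \<Rightarrow> 'b \<Rightarrow> 'b) \<Rightarrow> ('d \<Rightarrow> 'b \<Rightarrow> 'b) \<Rightarrow>
   ('b'::ring \<Rightarrow> 'd'::ring_1) \<Rightarrow> ('d' \<Rightarrow> 'b' \<Rightarrow> 'b') \<Rightarrow> ('d' \<Rightarrow> 'b' \<Rightarrow> 'b') \<Rightarrow>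
   ('d \<Rightarrow> 'd') \<Rightarrow> ('d \<Rightarrow> 'b \<Rightarrow> 'b') \<Rightarrow> ('d \<Rightarrow> 'd \<Rightarrow> 'b') \<Rightarrow> 'b' \<Rightarrow>
   ('d \<Rightarrow> 'd \<Rightarrow> 'b') \<Rightarrow> 'b' \<Rightarrow> bool" where
  "ann_functor d thl thr d' thl' thr' Fo Fm Fs Fz Fp Fu \<longleftrightarrow>
     \<comment> \<open>F is a functor\<close>
     (\<forall>x b. Fo (d b + x) = d' (Fm x b) + Fo x) \<and>
     (\<forall>x. Fm x 0 = 0) \<and>
     (\<forall>x b c. Fm x (b + c) = Fm x b + Fm (d b + x) c) \<and>
     \<comment> \<open>F-breve: natural (iso)morphisms F(x+y) -> Fx + Fy\<close>
     (\<forall>x y. Fo x + Fo y = d' (Fs x y) + Fo (x + y)) \<and>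
     (\<forall>x y b c. Fm (x + y) (b + c) + Fs (d b + x) (d c + y) = Fs x y + (Fm x b + Fm y c)) \<and>
     \<comment> \<open>symmetric monoidal w.r.t. sum: associativity, commutativity, unit\<close>
     (\<forall>x y z. Fm ((x + y) + z) 0 + Fs x (y + z) + (0 + Fs y z) + 0
              = Fs (x + y) z + (Fs x y + 0)) \<and>
     (\<forall>x y. Fm (x + y) 0 + Fs y x = Fs x y + 0) \<and>
     0 = d' Fz + Fo 0 \<and>
     (\<forall>x. Fs 0 x + (Fz + 0) + 0 = Fm (0 + x) 0) \<and>
     (\<forall>x. Fs x 0 + (0 + Fz) + 0 = Fm (x + 0) 0) \<and>
     \<comment> \<open>F-tilde: natural (iso)morphisms F(xy) -> Fx Fy\<close>
     (\<forall>x y. Fo x * Fo y = d' (Fp x y) + Fo (x * y)) \<and>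
     (\<forall>x y b c. Fm (x * y) (tlab thl thr x b y c) + Fp (d b + x) (d c + y)
                = Fp x y + tlab thl' thr' (Fo x) (Fm x b) (Fo y) (Fm y c)) \<and>
     \<comment> \<open>monoidal w.r.t. product: associativity and unit (F_*)\<close>
     (\<forall>x y z. Fm ((x * y) * z) 0 + Fp x (y * z) + tlab thl' thr' (Fo x) 0 (Fo (y * z)) (Fp y z) + 0
              = Fp (x * y) z + tlab thl' thr' (Fo (x * y)) (Fp x y) (Fo z) 0) \<and>
     1 = d' Fu + Fo 1 \<and>
     (\<forall>x. Fp 1 x + tlab thl' thr' (Fo 1) Fu (Fo x) 0 + 0 = Fm (1 * x) 0) \<and>
     (\<forall>x. Fp x 1 + tlab thl' thr' (Fo x) 0 (Fo 1) Fu + 0 = Fm (x * 1) 0) \<and>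
     \<comment> \<open>compatibility with the (identity) distributivity constraints\<close>
     (\<forall>x y z. Fp x (y + z) + tlab thl' thr' (Fo x) 0 (Fo (y + z)) (Fs y z) + 0
              = Fm (x * (y + z)) 0 + Fs (x * y) (x * z) + (Fp x y + Fp x z)) \<and>
     (\<forall>x y z. Fp (x + y) z + tlab thl' thr' (Fo (x + y)) (Fs x y) (Fo z) 0 + 0
              = Fm ((x + y) * z) 0 + Fs (x * z) (y * z) + (Fp x z + Fp y z))"

definition single_ann_functor ::
  "('b::ring \<Rightarrow> 'd::ring_1) \<Rightarrow> ('d \<Rightarrow> 'b \<Rightarrow> 'b) \<Rightarrow> ('d \<Rightarrow> 'b \<Rightarrow> 'b) \<Rightarrow>
   ('b'::ring \<Rightarrow> 'd'::ring_1) \<Rightarrow> ('d' \<Rightarrow> 'b' \<Rightarrow> 'b') \<Rightarrow> ('d' \<Rightarrow> 'b' \<Rightarrow> 'b') \<Rightarrow>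
   ('d \<Rightarrow> 'd') \<Rightarrow> ('d \<Rightarrow> 'b \<Rightarrow> 'b') \<Rightarrow> ('d \<Rightarrow> 'd \<Rightarrow> 'b') \<Rightarrow> 'b' \<Rightarrow>
   ('d \<Rightarrow> 'd \<Rightarrow> 'b') \<Rightarrow> 'b' \<Rightarrow> bool" where
  "single_ann_functor d thl thr d' thl' thr' Fo Fm Fs Fz Fp Fu \<longleftrightarrow>
     ann_functor d thl thr d' thl' thr' Fo Fm Fs Fz Fp Fu \<and>
     Fo 0 = 0 \<and> Fo 1 = 1 \<and>
     (\<exists>c. \<forall>x y. Fs x y = c) \<and> (\<exists>k. \<forall>x y. Fp x y = k)"

end

theory Submission
  imports Defs
begin

text \<open>Since every constraint of an associated Ann-category is an identity, the defining
diagrams of a single Ann-functor collapse to equations between labels. With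
\<open>\<breve>F\<close> constant and \<open>F(0) = 0'\<close>, the equation \<open>F x + F y = d'(\<breve>F) + F(x + y)\<close> at
\<open>x = y = 0\<close> gives \<open>d'(\<breve>F) = 0\<close>, so \<open>F\<close> is additive on objects; likewise \<open>F\<close> is
multiplicative. Naturality of the constant \<open>\<breve>F\<close> makes the label map additive and
independent of the source object, and naturality of the constant \<open>\<widetilde>F\<close> says that it
carries the product label \<open>bb' + b\<theta>\<^sub>x\<^sub>' + \<theta>\<^sub>xb'\<close> to its primed counterpart; taking zero
labels or zero objects there yields multiplicativity and compatibility with \<open>\<theta>\<close>.\<close>

lemma theta_hom_zero:
  assumes "theta_hom thl thr"
  shows "thl 0 b = 0" and "thr 0 b = 0"
proof -
  have "thl (0 + 0) b = thl 0 b + thl 0 b" and "thr (0 + 0) b = thr 0 b + thr 0 b"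
    using assms unfolding theta_hom_def by blast+
  then show "thl 0 b = 0" and "thr 0 b = 0" by simp_all
qed

lemma
  assumes "theta_hom thl thr"
  shows tlab_zero_objects: "tlab thl thr 0 a 0 b = a * b"
    and tlab_left_action: "tlab thl thr x 0 0 b = thl x b"
    and tlab_right_action: "tlab thl thr 0 b x 0 = thr x b"
  using theta_hom_zero[OF assms] unfolding tlab_def by simp_all

lemma E_system_theta_hom: "E_system d thl thr \<Longrightarrow> theta_hom thl thr"
  unfolding E_system_def by blast

locale single_functor =
  fixes d :: "'b::ring \<Rightarrow> 'd::ring_1" and thl thr :: "'d \<Rightarrow> 'b \<Rightarrow> 'b"
    and d' :: "'b'::ring \<Rightarrow> 'd'::ring_1" and thl' thr' :: "'d' \<Rightarrow> 'b' \<Rightarrow> 'b'"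
    and Fo :: "'d \<Rightarrow> 'd'" and Fm :: "'d \<Rightarrow> 'b \<Rightarrow> 'b'"
    and Fs :: "'d \<Rightarrow> 'd \<Rightarrow> 'b'" and Fz :: "'b'"
    and Fp :: "'d \<Rightarrow> 'd \<Rightarrow> 'b'" and Fu :: "'b'"
  assumes single: "single_ann_functor d thl thr d' thl' thr' Fo Fm Fs Fz Fp Fu"
begin

lemma Fo_zero: "Fo 0 = 0"
  using single unfolding single_ann_functor_def by blast

lemma ann_functor: "ann_functor d thl thr d' thl' thr' Fo Fm Fs Fz Fp Fu"
  using single unfolding single_ann_functor_def by blast

lemma Fs_const: "Fs x y = Fs 0 0" and Fp_const: "Fp x y = Fp 0 0"
  using single unfolding single_ann_functor_def by auto

lemma Fo_target: "Fo (d b + x) = d' (Fm x b) + Fo x"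
  using ann_functor unfolding ann_functor_def by (elim conjE) fast

lemma Fm_id: "Fm x 0 = 0"
  using ann_functor unfolding ann_functor_def by (elim conjE) fast

lemma Fo_sum: "Fo x + Fo y = d' (Fs x y) + Fo (x + y)"
  using ann_functor unfolding ann_functor_def by (elim conjE) fast

lemma Fs_natural: "Fm (x + y) (b + c) + Fs (d b + x) (d c + y) = Fs x y + (Fm x b + Fm y c)"
  using ann_functor unfolding ann_functor_def by (elim conjE) fast

lemma Fo_prod: "Fo x * Fo y = d' (Fp x y) + Fo (x * y)"
  using ann_functor unfolding ann_functor_def by (elim conjE) fast

lemma Fp_natural:
  "Fm (x * y) (tlab thl thr x b y c) + Fp (d b + x) (d c + y)
     = Fp x y + tlab thl' thr' (Fo x) (Fm x b) (Fo y) (Fm y c)"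
  using ann_functor unfolding ann_functor_def by (elim conjE) fast

lemma Fo_add: "Fo (x + y) = Fo x + Fo y"
proof -
  have "d' (Fs 0 0) = 0"
    using Fo_sum[of 0 0] by (simp add: Fo_zero)
  then show ?thesis
    using Fo_sum[of x y] by (simp add: Fs_const[of x y])
qed

lemma Fo_mult: "Fo (x * y) = Fo x * Fo y"
proof -
  have "d' (Fp 0 0) = 0"
    using Fo_prod[of 0 0] by (simp add: Fo_zero)
  then show ?thesis
    using Fo_prod[of x y] by (simp add: Fp_const[of x y])
qed

lemma Fm_add_sources: "Fm (x + y) (b + c) = Fm x b + Fm y c"
  using Fs_natural[of x y b c] by (simp add: Fs_const[of x y] Fs_const[of "d b + x"])

lemma Fm_source_indep: "Fm x b = Fm 0 b"
  using Fm_add_sources[of 0 x b 0] by (simp add: Fm_id)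

lemma Fm_add: "Fm 0 (a + b) = Fm 0 a + Fm 0 b"
  using Fm_add_sources[of 0 0 a b] by simp

lemma Fm_tlab: "Fm 0 (tlab thl thr x a y b) = tlab thl' thr' (Fo x) (Fm 0 a) (Fo y) (Fm 0 b)"
  using Fp_natural[of x y a b]
  by (simp add: Fp_const[of x y] Fp_const[of "d a + x"] Fm_source_indep[of x a]
      Fm_source_indep[of y b] Fm_source_indep[of "x * y"])

lemma Fo_d: "Fo (d b) = d' (Fm 0 b)"
  using Fo_target[of b 0] by (simp add: Fo_zero)

end

theorem mainTheorem4:
  fixes d :: "'b::ring \<Rightarrow> 'd::ring_1" and thl thr :: "'d \<Rightarrow> 'b \<Rightarrow> 'b"
    and d' :: "'b'::ring \<Rightarrow> 'd'::ring_1" and thl' thr' :: "'d' \<Rightarrow> 'b' \<Rightarrow> 'b'"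
    and Fo :: "'d \<Rightarrow> 'd'" and Fm :: "'d \<Rightarrow> 'b \<Rightarrow> 'b'"
    and Fs Fp :: "'d \<Rightarrow> 'd \<Rightarrow> 'b'" and Fz Fu :: "'b'"
  assumes "E_system d thl thr"
    and "E_system d' thl' thr'"
    and "single_ann_functor d thl thr d' thl' thr' Fo Fm Fs Fz Fp Fu"
  shows "E_morphism d thl thr d' thl' thr' (\<lambda>b. Fm 0 b) Fo"
proof -
  interpret single_functor d thl thr d' thl' thr' Fo Fm Fs Fz Fp Fu
    by unfold_locales (fact assms(3))
  have \<theta>: "theta_hom thl thr" and \<theta>': "theta_hom thl' thr'"
    using assms(1,2) by (simp_all add: E_system_theta_hom)
  have "Fm 0 (a * b) = Fm 0 a * Fm 0 b" for a b
    using Fm_tlab[of 0 a 0 b] by (simp add: Fo_zero tlab_zero_objects[OF \<theta>] tlab_zero_objects[OF \<theta>'])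
  moreover have "Fm 0 (thl x b) = thl' (Fo x) (Fm 0 b)" for x b
    using Fm_tlab[of x 0 0 b]
    by (simp add: Fo_zero Fm_id tlab_left_action[OF \<theta>] tlab_left_action[OF \<theta>'])
  moreover have "Fm 0 (thr x b) = thr' (Fo x) (Fm 0 b)" for x b
    using Fm_tlab[of 0 b x 0]
    by (simp add: Fo_zero Fm_id tlab_right_action[OF \<theta>] tlab_right_action[OF \<theta>'])
  ultimately show ?thesis
    unfolding E_morphism_def ring_hom'_def by (simp add: Fm_add Fo_add Fo_mult Fo_d)
qed

end
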